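(* Let $x\in\mathbb{R}^d$ with success probabilities $\rho_i(x)>\tfrac12$ for all $i$, let $M\ge1$, $l=\lfloor\frac{M+1}2\rfloor$, and $\rho(x):=\min_{1\le i\le d}\rho_i(x)$. Then $$\big(1-e^{-(2\rho(x)-1)^2l}\big)\|g(x)\|_1\le\|g(x)\|_{\rho_M}\le\|g(x)\|_1.$$
   Context: $g(x)\in\mathbb{R}^d$ is the gradient at $x$ and $\rho_i(x)\in(\tfrac12,1]$ are given numbers (success probabilities). $I(p;a,b)=\frac{\int_0^pt^{a-1}(1-t)^{b-1}dt}{\int_0^1t^{a-1}(1-t)^{b-1}dt}$ is the regularized incomplete beta function, and $\|g(x)\|_{\rho_M}:=\sum_{i=1}^d\big(2I(\rho_i(x);l,l)-1\big)|g_i(x)|$. *)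

theory Defs
  imports "HOL-Analysis.Analysis"
begin

definition reg_inc_beta :: "real \<Rightarrow> real \<Rightarrow> real \<Rightarrow> real" where
  "reg_inc_beta p a b =
     integral {0..p} (\<lambda>t. t powr (a - 1) * (1 - t) powr (b - 1)) /
     integral {0..1} (\<lambda>t. t powr (a - 1) * (1 - t) powr (b - 1))"

definition norm1 :: "real^'n \<Rightarrow> real" where
  "norm1 v = (\<Sum>i\<in>UNIV. \<bar>v $ i\<bar>)"

definition rho_norm :: "real^'n \<Rightarrow> nat \<Rightarrow> real^'n \<Rightarrow> real" where
  "rho_norm rho l v = (\<Sum>i\<in>UNIV. (2 * reg_inc_beta (rho $ i) (real l) (real l) - 1) * \<bar>v $ i\<bar>)"

end

theory Submission
  imports Defs
begin

text \<open>For integer l \<ge> 1 the integrand of I(p; l, l) is the polynomial kernel (t(1-t))^(l-1), and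
  the deficit 1 - I(p; l, l) is T(p)/T(0) with T the tail integral of the kernel. By symmetry
  T(1/2) = T(0)/2. For p \<ge> 1/2 the first moment bound (2p-1) T(p) \<le> \<integral>_p^1 (2t-1)(t(1-t))^(l-1) dt
  = (p(1-p))^l / l, together with 4p(1-p) \<le> 1, shows that T(p) exp(l(2p-1)^2) is decreasing on
  [1/2, 1]; hence T(p) \<le> T(0)/2 \<cdot> exp(-l(2p-1)^2), i.e. 2 I(p; l, l) - 1 \<ge> 1 - exp(-l(2p-1)^2).
  Summing over the coordinates gives the two norm inequalities.\<close>

definition beta_kernel :: "nat \<Rightarrow> real \<Rightarrow> real" where
  "beta_kernel l t = (t * (1 - t)) ^ (l - 1)"

definition beta_tail :: "nat \<Rightarrow> real \<Rightarrow> real" where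
  "beta_tail l p = integral {p..1} (beta_kernel l)"

lemma continuous_on_beta_kernel: "continuous_on S (beta_kernel l)"
  unfolding beta_kernel_def by (intro continuous_intros)

lemma beta_kernel_integrable: "beta_kernel l integrable_on {a..b}"
  by (rule integrable_continuous_real[OF continuous_on_beta_kernel])

lemma beta_kernel_nonneg: "0 \<le> t \<Longrightarrow> t \<le> 1 \<Longrightarrow> 0 \<le> beta_kernel l t"
  unfolding beta_kernel_def by simp

lemma beta_kernel_reflect: "beta_kernel l (1 - t) = beta_kernel l t"
  unfolding beta_kernel_def by (simp add: mult.commute)

lemma beta_tail_nonneg: "0 \<le> p \<Longrightarrow> p \<le> 1 \<Longrightarrow> 0 \<le> beta_tail l p"
  unfolding beta_tail_def by (auto intro!: integral_nonneg beta_kernel_integrable beta_kernel_nonneg)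

lemma continuous_on_beta_tail: "continuous_on {0..1} (beta_tail l)"
  unfolding beta_tail_def by (rule indefinite_integral_continuous_1'[OF beta_kernel_integrable])

lemma beta_tail_has_derivative:
  assumes "0 < x" "x < 1"
  shows "(beta_tail l has_real_derivative - beta_kernel l x) (at x)"
proof -
  have "(beta_tail l has_real_derivative - beta_kernel l x) (at x within {0..1})"
    unfolding beta_tail_def
    by (rule integral_has_real_derivative'[OF continuous_on_beta_kernel]) (use assms in auto)
  moreover have "at x within {0..1::real} = at x"
    using assms by (intro at_within_interior) auto
  ultimately show ?thesis by simp
qed

lemma beta_tail_half: "2 * beta_tail l (1/2) = beta_tail l 0"
proof -
  let ?K = "\<lambda>p. beta_tail l p + beta_tail l (1 - p)"
  have "(?K has_real_derivative 0) (at x)" if "0 < x" "x < 1" for x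
  proof -
    have "(?K has_real_derivative - beta_kernel l x + - beta_kernel l (1 - x) * - 1) (at x)"
      using that by (intro DERIV_add DERIV_chain2[where f = "beta_tail l"] beta_tail_has_derivative
          derivative_eq_intros) auto
    then show ?thesis by (simp add: beta_kernel_reflect)
  qed
  moreover have "continuous_on {0..1} ?K"
    by (intro continuous_on_add continuous_on_beta_tail
        continuous_on_compose2[OF continuous_on_beta_tail, of _ "\<lambda>p. 1 - p"] continuous_intros)
      auto
  ultimately have "?K (1/2) = ?K 0"
    by (intro DERIV_isconst2[of 0 1 ?K]) auto
  then show ?thesis by (simp add: beta_tail_def)
qed

lemma beta_tail_zero_pos: "0 < beta_tail l 0"
proof -
  have "(1/2) * (3/16) ^ (l - 1) = integral {1/4..3/4::real} (\<lambda>_. (3/16::real) ^ (l - 1))"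
    by simp
  also have "\<dots> \<le> integral {1/4..3/4} (beta_kernel l)"
  proof (rule integral_le[OF _ beta_kernel_integrable])
    fix t :: real assume "t \<in> {1/4..3/4}"
    then have "0 \<le> (t - 1/4) * (3/4 - t)" by (intro mult_nonneg_nonneg) auto
    moreover have "t * (1 - t) - 3/16 = (t - 1/4) * (3/4 - t)" by (simp add: field_simps)
    ultimately have "3/16 \<le> t * (1 - t)" by linarith
    then show "(3/16) ^ (l - 1) \<le> beta_kernel l t"
      unfolding beta_kernel_def by (intro power_mono) auto
  qed auto
  also have "\<dots> \<le> beta_tail l 0"
    unfolding beta_tail_def
    by (rule integral_subset_le) (auto intro!: beta_kernel_integrable beta_kernel_nonneg)
  moreover have "0 < (3/16::real) ^ (l - 1)" by simp
  ultimately show ?thesis by linarith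
qed

lemma reg_inc_beta_eq_beta_tail:
  assumes "l \<ge> 1" "0 \<le> p" "p \<le> 1"
  shows "reg_inc_beta p (real l) (real l) = 1 - beta_tail l p / beta_tail l 0"
proof -
  have kernel: "integral {0..q} (\<lambda>t. t powr (real l - 1) * (1 - t) powr (real l - 1))
      = integral {0..q} (beta_kernel l)" if "q \<le> 1" for q
  \<comment> \<open>Spike at the endpoints: \<open>0 powr 0 = 0\<close>, unlike the kernel for l = 1.\<close>
  proof (rule integral_spike[of "{0, 1}"])
    fix t assume t: "t \<in> {0..q} - {0, 1}"
    then have "0 < t" "0 < 1 - t" using that by auto
    moreover have "real l - 1 = real (l - 1)" using assms(1) by simp
    ultimately show "beta_kernel l t = t powr (real l - 1) * (1 - t) powr (real l - 1)"
      unfolding beta_kernel_def power_mult_distrib by (simp only: powr_realpow)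
  qed auto
  have "integral {0..p} (beta_kernel l) = beta_tail l 0 - beta_tail l p"
    unfolding beta_tail_def
    using Henstock_Kurzweil_Integration.integral_combine[OF assms(2,3) beta_kernel_integrable, of l]
    by simp
  moreover have "integral {0..1} (beta_kernel l) = beta_tail l 0"
    by (simp add: beta_tail_def)
  moreover have "beta_tail l 0 \<noteq> 0" using beta_tail_zero_pos[of l] by simp
  ultimately show ?thesis
    unfolding reg_inc_beta_def kernel[OF assms(3)] kernel[OF order_refl]
    by (simp add: diff_divide_distrib)
qed

lemma reg_inc_beta_le_one:
  assumes "l \<ge> 1" "0 \<le> p" "p \<le> 1"
  shows "reg_inc_beta p (real l) (real l) \<le> 1"
  using beta_tail_nonneg[OF assms(2,3), of l] beta_tail_zero_pos[of l]
  by (simp add: reg_inc_beta_eq_beta_tail[OF assms])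

lemma first_moment_beta_kernel:
  assumes "l \<ge> 1" "p \<le> 1"
  shows "((\<lambda>t. (2 * t - 1) * beta_kernel l t) has_integral (p * (1 - p)) ^ l / real l) {p..1}"
proof -
  let ?F = "\<lambda>t. - ((t * (1 - t)) ^ l) / real l"
  have ftc: "((\<lambda>t. (2 * t - 1) * beta_kernel l t) has_integral ?F 1 - ?F p) {p..1}"
  proof (rule fundamental_theorem_of_calculus[OF assms(2)])
    fix x :: real
    have "(?F has_real_derivative
        - (real l * ((x * (1 - x)) ^ (l - 1) * (1 - 2 * x))) / real l) (at x)"
      by (auto intro!: derivative_eq_intros)
    moreover have "- (real l * ((x * (1 - x)) ^ (l - 1) * (1 - 2 * x))) / real l
        = (2 * x - 1) * beta_kernel l x"
      using assms(1) by (simp add: beta_kernel_def field_simps)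
    ultimately show "(?F has_vector_derivative (2 * x - 1) * beta_kernel l x) (at x within {p..1})"
      by (simp add: has_real_derivative_iff_has_vector_derivative[symmetric]
          has_field_derivative_at_within)
  qed
  have "?F 1 - ?F p = (p * (1 - p)) ^ l / real l"
    using assms(1) by simp
  with ftc show ?thesis by (simp only:)
qed

lemma beta_tail_moment_bound:
  assumes "l \<ge> 1" "0 \<le> p" "p \<le> 1"
  shows "4 * real l * (2 * p - 1) * beta_tail l p \<le> beta_kernel l p"
proof -
  note moment = first_moment_beta_kernel[OF assms(1,3)]
  have "(2 * p - 1) * beta_tail l p = integral {p..1} (\<lambda>t. (2 * p - 1) * beta_kernel l t)"
    by (simp add: beta_tail_def)
  also have "\<dots> \<le> integral {p..1} (\<lambda>t. (2 * t - 1) * beta_kernel l t)"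
  proof (rule integral_le)
    show "(\<lambda>t. (2 * p - 1) * beta_kernel l t) integrable_on {p..1}"
      by (intro integrable_continuous_real continuous_intros continuous_on_beta_kernel)
    show "(\<lambda>t. (2 * t - 1) * beta_kernel l t) integrable_on {p..1}"
      using moment by blast
    fix t assume "t \<in> {p..1}"
    with assms show "(2 * p - 1) * beta_kernel l t \<le> (2 * t - 1) * beta_kernel l t"
      by (intro mult_right_mono beta_kernel_nonneg) auto
  qed
  also have "\<dots> = (p * (1 - p)) ^ l / real l"
    using moment by (rule integral_unique)
  finally have "4 * real l * (2 * p - 1) * beta_tail l p \<le> 4 * (p * (1 - p)) ^ l"
    using assms(1) by (simp add: field_simps)
  also have "\<dots> = 4 * (p * (1 - p)) * beta_kernel l p"
    using assms(1) by (cases l) (auto simp: beta_kernel_def)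
  also have "\<dots> \<le> beta_kernel l p"
  proof -
    have "4 * (p * (1 - p)) \<le> 1"
      using zero_le_power2[of "2 * p - 1"] by (simp add: power2_eq_square algebra_simps)
    then show ?thesis
      using beta_kernel_nonneg[OF assms(2,3), of l] mult_right_mono by fastforce
  qed
  finally show ?thesis .
qed

lemma beta_tail_exp_bound:
  assumes "l \<ge> 1" "1/2 \<le> p" "p \<le> 1"
  shows "beta_tail l p \<le> beta_tail l 0 / 2 * exp (- ((2 * p - 1)^2 * real l))"
proof -
  define E where "E x = exp (real l * (2 * x - 1)^2)" for x
  let ?H = "\<lambda>x. beta_tail l x * E x"
  have "?H p \<le> ?H (1/2)"
  proof (rule DERIV_nonpos_imp_decreasing_open[OF assms(2)])
    fix x :: real assume x: "1/2 < x" "x < p"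
    have "(?H has_real_derivative - beta_kernel l x * E x + E x * (real l * (2 * (2 * x - 1) * 2))
        * beta_tail l x) (at x)"
      unfolding E_def using x assms
      by (auto intro!: derivative_eq_intros beta_tail_has_derivative)
    moreover have "- beta_kernel l x * E x + E x * (real l * (2 * (2 * x - 1) * 2)) * beta_tail l x
        = E x * (4 * real l * (2 * x - 1) * beta_tail l x - beta_kernel l x)"
      by (simp add: algebra_simps)
    moreover have "E x * (4 * real l * (2 * x - 1) * beta_tail l x - beta_kernel l x) \<le> 0"
      using beta_tail_moment_bound[OF assms(1), of x] x assms
      by (intro mult_nonneg_nonpos) (auto simp: E_def)
    ultimately show "\<exists>y. (?H has_real_derivative y) (at x) \<and> y \<le> 0" by auto
  next
    show "continuous_on {1/2..p} ?H"
      unfolding E_def using assms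
      by (intro continuous_intros continuous_on_subset[OF continuous_on_beta_tail]) auto
  qed
  then have "beta_tail l p * E p \<le> beta_tail l 0 / 2"
    using beta_tail_half[of l] by (simp add: E_def)
  moreover have "E p * exp (- ((2 * p - 1)^2 * real l)) = 1"
    by (simp add: E_def exp_minus_inverse mult.commute)
  ultimately show ?thesis
    by (metis (no_types, lifting) exp_ge_zero mult.assoc mult.right_neutral mult_right_mono)
qed

lemma reg_inc_beta_lower_bound:
  assumes "l \<ge> 1" "1/2 \<le> q" "q \<le> p" "p \<le> 1"
  shows "1 - exp (- ((2 * q - 1)^2 * real l)) \<le> 2 * reg_inc_beta p (real l) (real l) - 1"
proof -
  have "exp (- ((2 * p - 1)^2 * real l)) \<le> exp (- ((2 * q - 1)^2 * real l))"
    using assms by (auto intro!: mult_right_mono power_mono)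
  moreover have "2 * (beta_tail l p / beta_tail l 0) \<le> exp (- ((2 * p - 1)^2 * real l))"
    using beta_tail_exp_bound[OF assms(1), of p] beta_tail_zero_pos[of l] assms
    by (simp add: field_simps)
  moreover have "2 * reg_inc_beta p (real l) (real l) - 1 = 1 - 2 * (beta_tail l p / beta_tail l 0)"
    using assms by (simp add: reg_inc_beta_eq_beta_tail)
  ultimately show ?thesis by linarith
qed

lemma weighted_norm1_bounds:
  fixes v :: "real^'n"
  assumes "\<And>i. a \<le> c i" "\<And>i. c i \<le> 1"
  shows "a * norm1 v \<le> (\<Sum>i\<in>UNIV. c i * \<bar>v $ i\<bar>)" "(\<Sum>i\<in>UNIV. c i * \<bar>v $ i\<bar>) \<le> norm1 v"
proof -
  show "a * norm1 v \<le> (\<Sum>i\<in>UNIV. c i * \<bar>v $ i\<bar>)"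
    unfolding norm1_def sum_distrib_left by (intro sum_mono mult_right_mono assms) auto
  have "(\<Sum>i\<in>UNIV. c i * \<bar>v $ i\<bar>) \<le> (\<Sum>i\<in>UNIV. 1 * \<bar>v $ i\<bar>)"
    by (intro sum_mono mult_right_mono assms) auto
  then show "(\<Sum>i\<in>UNIV. c i * \<bar>v $ i\<bar>) \<le> norm1 v"
    by (simp add: norm1_def)
qed

theorem mainTheorem5:
  fixes x :: "real^'n"
    and g :: "real^'n \<Rightarrow> real^'n"
    and \<rho> :: "real^'n \<Rightarrow> real^'n"
    and M l :: nat
  assumes rho_range: "\<And>i. 1/2 < \<rho> x $ i \<and> \<rho> x $ i \<le> 1"
    and M: "M \<ge> 1"
    and l_def: "l = (M + 1) div 2"
  shows "(1 - exp (- ((2 * Min (range (\<lambda>i. \<rho> x $ i)) - 1)^2 * real l))) * norm1 (g x)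
           \<le> rho_norm (\<rho> x) l (g x)
         \<and> rho_norm (\<rho> x) l (g x) \<le> norm1 (g x)"
proof -
  have l: "l \<ge> 1" using M l_def by simp
  define m where "m = Min (range (\<lambda>i. \<rho> x $ i))"
  have "m \<in> range (\<lambda>i. \<rho> x $ i)" unfolding m_def by (intro Min_in) auto
  then have "1/2 < m" using rho_range by auto
  moreover have "m \<le> \<rho> x $ i" for i unfolding m_def by (intro Min_le) auto
  ultimately have lower: "1 - exp (- ((2 * m - 1)^2 * real l))
      \<le> 2 * reg_inc_beta (\<rho> x $ i) (real l) (real l) - 1" for i
    using rho_range[of i] by (intro reg_inc_beta_lower_bound[OF l]) auto
  have upper: "2 * reg_inc_beta (\<rho> x $ i) (real l) (real l) - 1 \<le> 1" for i
    using reg_inc_beta_le_one[OF l, of "\<rho> x $ i"] rho_range[of i] by simp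
  show ?thesis
    unfolding rho_norm_def m_def[symmetric]
    using weighted_norm1_bounds[where v = "g x", OF lower upper] by (intro conjI)
qed

end
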